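(* Let $f,g:\mathbb{C}\to\mathbb{C}$ be entire functions with $f\circ g=g\circ f$, and suppose that $f$ and $g$ satisfy Property A. Then the bungee set $BU(f)$ is completely invariant under $g$, and $BU(g)$ is completely invariant under $f$.
   Context: For an entire function $h$, $h^n$ denotes the $n$-th iterate. Escaping set: $I(h)=\{z: h^n(z)\to\infty\}$. Filled-in Julia set: $K(h)=\{z: (h^n(z))_n \text{ bounded}\}$. Bungee set: $BU(h)=\mathbb{C}\setminus(I(h)\cup K(h))$, i.e. the set of $z$ whose orbit $(h^n(z))$ has a bounded subsequence and also a subsequence tending to $\infty$. A set $A$ is completely invariant under $\phi$ if $\phi(A)\subseteq A$ and $\phi^{-1}(A)\subseteq A$. Property A for the pair $(f,g)$: for every $z\in\mathbb{C}$ and every strictly increasing sequence $(n_k)$ with $|f^{n_k}(z)|\to\infty$, one has $|g(f^{n_k}(z))|\to\infty$; and symmetrically with the roles of $f$ and $g$ exchanged. *)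

theory Defs
  imports "HOL-Complex_Analysis.Complex_Analysis"
begin

definition escaping_set :: "(complex \<Rightarrow> complex) \<Rightarrow> complex set" where
  "escaping_set h = {z. filterlim (\<lambda>n. (h ^^ n) z) at_infinity sequentially}"

definition filled_julia_set :: "(complex \<Rightarrow> complex) \<Rightarrow> complex set" where
  "filled_julia_set h = {z. bounded (range (\<lambda>n. (h ^^ n) z))}"

definition bungee_set :: "(complex \<Rightarrow> complex) \<Rightarrow> complex set" where
  "bungee_set h = UNIV - (escaping_set h \<union> filled_julia_set h)"

definition completely_invariant :: "'a set \<Rightarrow> ('a \<Rightarrow> 'a) \<Rightarrow> bool" where
  "completely_invariant A \<phi> \<longleftrightarrow> \<phi> ` A \<subseteq> A \<and> \<phi> -` A \<subseteq> A"

definition property_A_one :: "(complex \<Rightarrow> complex) \<Rightarrow> (complex \<Rightarrow> complex) \<Rightarrow> bool" where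
  "property_A_one f g \<longleftrightarrow>
     (\<forall>z (n :: nat \<Rightarrow> nat). strict_mono n \<longrightarrow>
        filterlim (\<lambda>k. norm ((f ^^ n k) z)) at_top sequentially \<longrightarrow>
        filterlim (\<lambda>k. norm (g ((f ^^ n k) z))) at_top sequentially)"

definition property_A :: "(complex \<Rightarrow> complex) \<Rightarrow> (complex \<Rightarrow> complex) \<Rightarrow> bool" where
  "property_A f g \<longleftrightarrow> property_A_one f g \<and> property_A_one g f"

end

theory Submission
  imports Defs
begin

text \<open>If g commutes with f, the f-orbit of g z is the image under g of the f-orbit of z.
  Continuity of g lets boundedness pass forward and escape pass backward along this
  correspondence; Property A supplies the two remaining directions. So g preserves the escaping
  set and the filled-in Julia set of f in both directions, hence also their common complement,
  the bungee set.\<close>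

lemma unbounded_imp_subseq_norm_at_top:
  fixes s :: "nat \<Rightarrow> 'a::real_normed_vector"
  assumes "\<not> bounded (range s)"
  obtains r where "strict_mono r" "filterlim (\<lambda>k. norm (s (r k))) at_top sequentially"
proof -
  have exceeds: "\<exists>p>n. K < norm (s p)" for n and K :: real
  proof -
    have "\<not> eventually (\<lambda>p. norm (s p) \<le> max K 1) sequentially"
      using assms by (auto simp: Bseq_eq_bounded[symmetric] Bfun_def)
    then obtain p where "p \<ge> Suc n" "\<not> norm (s p) \<le> max K 1"
      by (auto simp: eventually_sequentially)
    then show ?thesis by (intro exI[of _ p]) auto
  qed
  have "\<exists>r. \<forall>k. real k < norm (s (r k)) \<and> r k < r (Suc k)"
    using exceeds[of 0 0] exceeds by (intro dependent_nat_choice) auto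
  then obtain r where r: "\<And>k. real k < norm (s (r k))" "\<And>k. r k < r (Suc k)"
    by blast
  have "filterlim (\<lambda>k. norm (s (r k))) at_top sequentially"
    by (rule filterlim_at_top_mono[OF filterlim_real_sequentially])
       (intro always_eventually allI less_imp_le r(1))
  with r(2) show thesis
    by (intro that) (auto simp: strict_mono_Suc_iff)
qed

lemma norm_at_top_imp_unbounded:
  fixes s :: "nat \<Rightarrow> 'a::real_normed_vector"
  assumes "filterlim (\<lambda>n. norm (s n)) at_top sequentially"
  shows "\<not> bounded (range s)"
proof
  assume "bounded (range s)"
  then obtain M where M: "\<And>n. norm (s n) \<le> M"
    unfolding bounded_iff by blast
  from assms have "eventually (\<lambda>n. M + 1 \<le> norm (s n)) sequentially"
    by (simp add: filterlim_at_top)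
  then obtain n where "M + 1 \<le> norm (s n)"
    by (auto simp: eventually_sequentially)
  with M[of n] show False by linarith
qed

lemma bounded_continuous_image:
  fixes g :: "'a::heine_borel \<Rightarrow> 'b::metric_space"
  assumes "continuous_on UNIV g" "bounded S"
  shows "bounded (g ` S)"
proof -
  have "compact (g ` closure S)"
    using assms by (intro compact_continuous_image continuous_on_subset[OF assms(1)])
      (auto simp: compact_closure)
  then show ?thesis
    using bounded_closure_image compact_imp_bounded by blast
qed

lemma norm_at_top_of_continuous_image:
  fixes g :: "'a::{heine_borel,real_normed_vector} \<Rightarrow> 'b::real_normed_vector"
  assumes "continuous_on UNIV g"
    and "filterlim (\<lambda>n. norm (g (s n))) at_top sequentially"
  shows "filterlim (\<lambda>n. norm (s n)) at_top sequentially"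
proof (rule ccontr)
  assume "\<not> ?thesis"
  then obtain B where "\<not> eventually (\<lambda>n. B \<le> norm (s n)) sequentially"
    unfolding filterlim_at_top by blast
  then have "\<exists>r::nat \<Rightarrow> nat. strict_mono r \<and> (\<forall>k. \<not> B \<le> norm (s (r k)))"
    by (rule not_eventually_sequentiallyD)
  then obtain r :: "nat \<Rightarrow> nat" where r: "strict_mono r" "\<And>k. norm (s (r k)) < B"
    by (auto simp: not_le)
  have "bounded (range (\<lambda>k. s (r k)))"
    using r(2) unfolding bounded_iff by (auto intro!: exI[of _ B] less_imp_le)
  then have "bounded (g ` range (\<lambda>k. s (r k)))"
    by (rule bounded_continuous_image[OF assms(1)])
  moreover have "filterlim (\<lambda>k. norm (g (s (r k)))) at_top sequentially"
    using filterlim_compose[OF assms(2) filterlim_subseq[OF r(1)]] by (simp add: o_def)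
  then have "\<not> bounded (range (\<lambda>k. g (s (r k))))"
    by (rule norm_at_top_imp_unbounded)
  ultimately show False
    by (simp add: image_image)
qed

lemma funpow_commute:
  assumes "f \<circ> g = g \<circ> f"
  shows "(f ^^ n) (g z) = g ((f ^^ n) z)"
proof (induction n)
  case (Suc n)
  then show ?case using assms by (simp add: fun_eq_iff)
qed simp

lemma escaping_set_iff_norm:
  "z \<in> escaping_set h \<longleftrightarrow> filterlim (\<lambda>n. norm ((h ^^ n) z)) at_top sequentially"
  by (simp add: escaping_set_def filterlim_at_infinity_conv_norm_at_top o_def)

lemma commuting_escaping_set_iff:
  fixes f g :: "complex \<Rightarrow> complex"
  assumes "continuous_on UNIV g" "f \<circ> g = g \<circ> f" "property_A_one f g"
  shows "g z \<in> escaping_set f \<longleftrightarrow> z \<in> escaping_set f"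
proof -
  have "g z \<in> escaping_set f \<longleftrightarrow> filterlim (\<lambda>n. norm (g ((f ^^ n) z))) at_top sequentially"
    by (simp add: escaping_set_iff_norm funpow_commute[OF assms(2)])
  also have "\<dots> \<longleftrightarrow> filterlim (\<lambda>n. norm ((f ^^ n) z)) at_top sequentially"
  proof
    assume "filterlim (\<lambda>n. norm ((f ^^ n) z)) at_top sequentially"
    then show "filterlim (\<lambda>n. norm (g ((f ^^ n) z))) at_top sequentially"
      using assms(3) strict_mono_id unfolding property_A_one_def id_def by blast
  qed (rule norm_at_top_of_continuous_image[OF assms(1)])
  finally show ?thesis
    by (simp add: escaping_set_iff_norm)
qed

lemma commuting_filled_julia_set_iff:
  fixes f g :: "complex \<Rightarrow> complex"
  assumes "continuous_on UNIV g" "f \<circ> g = g \<circ> f" "property_A_one f g"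
  shows "g z \<in> filled_julia_set f \<longleftrightarrow> z \<in> filled_julia_set f"
proof -
  let ?orbit = "\<lambda>n. (f ^^ n) z"
  have "g z \<in> filled_julia_set f \<longleftrightarrow> bounded (g ` range ?orbit)"
    by (simp add: filled_julia_set_def funpow_commute[OF assms(2)] image_image)
  also have "\<dots> \<longleftrightarrow> bounded (range ?orbit)"
  proof
    assume bounded_image: "bounded (g ` range ?orbit)"
    show "bounded (range ?orbit)"
    proof (rule ccontr)
      assume "\<not> bounded (range ?orbit)"
      then obtain r where r: "strict_mono r" "filterlim (\<lambda>k. norm (?orbit (r k))) at_top sequentially"
        by (rule unbounded_imp_subseq_norm_at_top)
      then have "filterlim (\<lambda>k. norm (g (?orbit (r k)))) at_top sequentially"
        using assms(3) unfolding property_A_one_def by blast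
      then have "\<not> bounded (range (\<lambda>k. g (?orbit (r k))))"
        by (rule norm_at_top_imp_unbounded)
      moreover have "range (\<lambda>k. g (?orbit (r k))) \<subseteq> g ` range ?orbit"
        by blast
      ultimately show False
        using bounded_image bounded_subset by blast
    qed
  qed (rule bounded_continuous_image[OF assms(1)])
  finally show ?thesis
    by (simp add: filled_julia_set_def)
qed

lemma commuting_completely_invariant_bungee_set:
  fixes f g :: "complex \<Rightarrow> complex"
  assumes "continuous_on UNIV g" "f \<circ> g = g \<circ> f" "property_A_one f g"
  shows "completely_invariant (bungee_set f) g"
proof -
  have "g z \<in> bungee_set f \<longleftrightarrow> z \<in> bungee_set f" for z
    using commuting_escaping_set_iff[OF assms] commuting_filled_julia_set_iff[OF assms]
    by (simp add: bungee_set_def)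
  then show ?thesis
    by (auto simp: completely_invariant_def)
qed

theorem mainTheorem3:
  fixes f g :: "complex \<Rightarrow> complex"
  assumes "f holomorphic_on UNIV" and "g holomorphic_on UNIV"
    and "f \<circ> g = g \<circ> f"
    and "property_A f g"
  shows "completely_invariant (bungee_set f) g \<and> completely_invariant (bungee_set g) f"
proof
  show "completely_invariant (bungee_set f) g"
    using assms by (intro commuting_completely_invariant_bungee_set)
      (auto simp: property_A_def holomorphic_on_imp_continuous_on)
  show "completely_invariant (bungee_set g) f"
    using assms by (intro commuting_completely_invariant_bungee_set)
      (auto simp: property_A_def holomorphic_on_imp_continuous_on)
qed

end
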